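(* Let $d\ge1$ and let $p_t(x)$, $t\ge0$, $x\in\mathbb Z^d$, be the transition probability of the continuous-time symmetric simple random walk on $\mathbb Z^d$ started at $0$, i.e. the solution of $\partial_tp=\frac{1}{2d}\Delta p$, $p_0=\mathbf 1_{\{x=0\}}$, where $\Delta f(x)=\sum_{n=1}^d(f(x+e_n)+f(x-e_n)-2f(x))$; set $p_t(x)=0$ for $t<0$. Then for all $s,s'\in\mathbb R$ and $y,y'\in\mathbb Z^d$, $\frac1d\sum_{x\in\mathbb Z^d}\sum_{n=1}^d\int_{-\infty}^{\infty}\nabla_np_{t+s}(x+y)\,\nabla_np_{t+s'}(x+y')\,dt=p_{|s-s'|}(y-y'),$ where $\nabla_nf(x)=f(x+e_n)-f(x)$ and $e_n$ is the $n$-th unit vector. *)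

theory Defs
  imports "HOL-Analysis.Analysis"
begin

text \<open>Lattice Z^d is modelled as int ^ 'n, with d = CARD('n) (any d >= 1).
  Unit vector e_n is axis n 1.\<close>

fun srw_step :: "nat \<Rightarrow> int ^ 'n \<Rightarrow> real" where
  "srw_step 0 x = (if x = 0 then 1 else 0)"
| "srw_step (Suc k) x =
     (1 / (2 * real CARD('n))) *
     (\<Sum>n\<in>(UNIV :: 'n set). srw_step k (x + axis n 1) + srw_step k (x - axis n 1))"

text \<open>Transition probability p_t(x) of the continuous-time simple random walk
  (rate-1 Poisson clock, generator (1/(2d)) Laplacian), started at 0;
  p_t(x) = 0 for t < 0.\<close>
definition srw_p :: "real \<Rightarrow> int ^ 'n \<Rightarrow> real" where
  "srw_p t x = (if t < 0 then 0
     else (\<Sum>k. exp (- t) * t ^ k / fact k * srw_step k x))"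

definition grad :: "'n \<Rightarrow> (int ^ 'n \<Rightarrow> real) \<Rightarrow> int ^ 'n \<Rightarrow> real" where
  "grad n f x = f (x + axis n 1) - f x"

end

theory Submission
  imports Defs
begin

text \<open>
  Write \<open>p\<^sub>t = \<Sum>\<^sub>k e\<^sup>-\<^sup>t t\<^sup>k/k! q\<^sub>k\<close>, with \<open>q\<^sub>k\<close> the \<open>k\<close>-step law of the discrete walk, and let
  \<open>P\<^sub>t\<close> be the same mixture taken one step later, so that \<open>\<partial>\<^sub>t p\<^sub>t = P\<^sub>t - p\<^sub>t\<close>.
  Chapman-Kolmogorov (\<open>p\<^sub>u * p\<^sub>v = p\<^sub>u\<^sub>+\<^sub>v\<close>, from the binomial identity for Poisson weights) and
  summation by parts give, for \<open>u, v \<ge> 0\<close>,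
  \<open>\<Sum>\<^sub>x (1/d) \<Sum>\<^sub>n \<nabla>\<^sub>n p\<^sub>u(x + y) \<nabla>\<^sub>n p\<^sub>v(x + y') = 2 (p\<^sub>r - P\<^sub>r)(y - y') = -2 \<partial>\<^sub>r p\<^sub>r(y - y')\<close>
  at \<open>r = u + v\<close>. Integrating over the times \<open>t\<close> with \<open>t + s, t + s' \<ge> 0\<close>, where
  \<open>r = 2t + s + s'\<close> runs from \<open>|s - s'|\<close> to \<open>\<infinity>\<close>, yields \<open>p\<^bsub>|s - s'|\<^esub>(y - y')\<close>, since
  \<open>p\<^sub>r(z) \<le> p\<^sub>r(0) \<longrightarrow> 0\<close>. For that limit: \<open>p\<^sub>r(0)\<close> decreases, so its derivative is small at some
  time; by the identity with \<open>u = v\<close> this makes all gradients of \<open>p\<^sub>u\<close> uniformly small at half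
  that time, and a probability distribution with uniformly small gradients is small at the origin.
  Sum and integral are interchanged by dominated convergence, with
  \<open>|\<nabla>p\<^sub>u \<nabla>p\<^sub>v| \<le> ((\<nabla>p\<^sub>u)\<^sup>2 + (\<nabla>p\<^sub>v)\<^sup>2)/2\<close> and again the case \<open>u = v\<close> of the identity.
\<close>

lemma has_sum_sum:
  fixes f :: "'i \<Rightarrow> 'a \<Rightarrow> 'b::topological_comm_monoid_add"
  assumes "finite I" "\<And>i. i \<in> I \<Longrightarrow> (f i has_sum S i) A"
  shows "((\<lambda>x. \<Sum>i\<in>I. f i x) has_sum (\<Sum>i\<in>I. S i)) A"
  using assms by (induction I rule: finite_induct) (auto intro!: has_sum_add)

lemma has_sum_diff:
  fixes f g :: "'a \<Rightarrow> 'b::topological_ab_group_add"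
  assumes "(f has_sum a) A" "(g has_sum b) A"
  shows "((\<lambda>x. f x - g x) has_sum (a - b)) A"
  using has_sum_add[OF assms(1), of "\<lambda>x. - g x" "- b"] assms(2)
  by (simp add: has_sum_uminus)

lemma has_sum_translate:
  fixes f :: "'a::ab_group_add \<Rightarrow> 'b::topological_comm_monoid_add"
  shows "((\<lambda>x. f (x + a)) has_sum S) UNIV \<longleftrightarrow> (f has_sum S) UNIV"
  by (rule has_sum_reindex_bij_witness[of UNIV "\<lambda>x. x - a" "\<lambda>x. x + a"]) auto

lemma has_sum_product_nonneg:
  fixes a :: "'a \<Rightarrow> real" and b :: "'b \<Rightarrow> real"
  assumes a: "(a has_sum SA) X" and b: "(b has_sum SB) Y"
    and "\<And>x. x \<in> X \<Longrightarrow> 0 \<le> a x" "\<And>y. y \<in> Y \<Longrightarrow> 0 \<le> b y"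
  shows "((\<lambda>(x, y). a x * b y) has_sum (SA * SB)) (X \<times> Y)"
proof -
  have inner: "((\<lambda>y. a x * b y) has_sum (a x * SB)) Y" for x
    using b by (rule has_sum_cmult_right)
  have outer: "((\<lambda>x. a x * SB) has_sum (SA * SB)) X"
    using a by (rule has_sum_cmult_left)
  have summable: "(\<lambda>(x, y). a x * b y) summable_on Sigma X (\<lambda>_. Y)"
    by (rule summable_on_SigmaI[where g="\<lambda>x. a x * SB"])
       (use inner outer assms(3,4) in \<open>auto intro: has_sum_imp_summable\<close>)
  show ?thesis
    by (rule has_sum_SigmaI[OF _ outer summable]) (use inner in auto)
qed

lemma has_sum_integral_dominated:
  fixes f g :: "'i::countable \<Rightarrow> 'a \<Rightarrow> real"
  assumes "infinite (UNIV :: 'i set)"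
    and f_int: "\<And>i. integrable M (f i)"
    and f_sum: "\<And>x. ((\<lambda>i. f i x) has_sum F x) UNIV"
    and bound: "\<And>i x. \<bar>f i x\<bar> \<le> g i x"
    and g_sum: "\<And>x. ((\<lambda>i. g i x) has_sum G x) UNIV"
    and G_int: "integrable M G"
  shows "integrable M F" and "((\<lambda>i. integral\<^sup>L M (f i)) has_sum integral\<^sup>L M F) UNIV"
proof -
  obtain e :: "nat \<Rightarrow> 'i" where e: "bij_betw e UNIV UNIV"
    using bij_betw_from_nat_into[OF _ assms(1)] by blast
  have g_nonneg: "0 \<le> g i x" for i x
    using bound[of i x] by linarith
  have ge_sum: "((\<lambda>k. g (e k) x) has_sum G x) UNIV" for x
    using has_sum_reindex_bij_betw[OF e, of "\<lambda>i. g i x"] g_sum by simp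
  have fe_sums: "(\<lambda>k. f (e k) x) sums F x" for x
    using has_sum_reindex_bij_betw[OF e, of "\<lambda>i. f i x"] f_sum by (simp add: has_sum_imp_sums)
  have summable_norm: "summable (\<lambda>k. norm (f (e k) x))" for x
    using bound ge_sum[of x]
    by (intro summable_comparison_test[OF _ sums_summable[OF has_sum_imp_sums]]) auto
  have "(\<Sum>k<N. \<integral>x. norm (f (e k) x) \<partial>M) \<le> integral\<^sup>L M G" for N
  proof -
    have "(\<Sum>k<N. \<integral>x. norm (f (e k) x) \<partial>M) = (\<integral>x. (\<Sum>k<N. norm (f (e k) x)) \<partial>M)"
      using f_int by (simp add: Bochner_Integration.integral_sum)
    also have "\<dots> \<le> integral\<^sup>L M G"
    proof (rule Bochner_Integration.integral_mono)
      fix x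
      have "(\<Sum>k<N. norm (f (e k) x)) \<le> (\<Sum>k<N. g (e k) x)"
        using bound by (intro sum_mono) auto
      also have "\<dots> \<le> G x"
        using ge_sum g_nonneg by (intro finite_sum_le_has_sum) auto
      finally show "(\<Sum>k<N. norm (f (e k) x)) \<le> G x" .
    qed (use f_int G_int in auto)
    finally show ?thesis .
  qed
  then have summable_int: "summable (\<lambda>k. \<integral>x. norm (f (e k) x) \<partial>M)"
    by (intro summableI_nonneg_bounded) auto
  have F_eq: "(\<lambda>x. \<Sum>k. f (e k) x) = F"
    using fe_sums by (auto simp: fun_eq_iff sums_iff)
  show "integrable M F"
    using integrable_suminf[OF f_int AE_I2[OF summable_norm] summable_int] F_eq by simp
  have "(\<lambda>k. integral\<^sup>L M (f (e k))) sums integral\<^sup>L M F"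
    using sums_integral[OF f_int AE_I2[OF summable_norm] summable_int] F_eq by simp
  then have "((\<lambda>k. integral\<^sup>L M (f (e k))) has_sum integral\<^sup>L M F) UNIV"
    by (rule norm_summable_imp_has_sum[rotated])
       (auto intro: summable_comparison_test[OF _ summable_int] integral_norm_bound)
  then show "((\<lambda>i. integral\<^sup>L M (f i)) has_sum integral\<^sup>L M F) UNIV"
    using has_sum_reindex_bij_betw[OF e, of "\<lambda>i. integral\<^sup>L M (f i)"] by simp
qed

lemma srw_step_nonneg: "0 \<le> srw_step k x"
  by (induction k arbitrary: x) (auto intro!: sum_nonneg add_nonneg_nonneg divide_nonneg_nonneg)

lemma srw_step_convolution:
  "((\<lambda>x. srw_step j (x + z) * srw_step k x) has_sum srw_step (j + k) (z :: int^'n)) UNIV"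
proof (induction k arbitrary: z)
  case 0
  show ?case
    by (rule has_sum_finite_neutralI[where B="{0}"]) auto
next
  case (Suc k)
  have plus: "((\<lambda>x. srw_step j (x + z) * srw_step k (x + axis n 1))
      has_sum srw_step (j + k) (z - axis n 1)) UNIV" for n
    using Suc.IH[of "z - axis n 1"]
      has_sum_translate[of "\<lambda>x. srw_step j (x + z) * srw_step k (x + axis n 1)" "- axis n 1"]
    by (simp add: algebra_simps)
  have minus: "((\<lambda>x. srw_step j (x + z) * srw_step k (x - axis n 1))
      has_sum srw_step (j + k) (z + axis n 1)) UNIV" for n
    using Suc.IH[of "z + axis n 1"]
      has_sum_translate[of "\<lambda>x. srw_step j (x + z) * srw_step k (x - axis n 1)" "axis n 1"]
    by (simp add: algebra_simps)
  have "((\<lambda>x. 1 / (2 * real CARD('n)) * (\<Sum>n\<in>UNIV.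
          srw_step j (x + z) * srw_step k (x + axis n 1) + srw_step j (x + z) * srw_step k (x - axis n 1)))
      has_sum 1 / (2 * real CARD('n)) *
        (\<Sum>n\<in>UNIV. srw_step (j + k) (z - axis n 1) + srw_step (j + k) (z + axis n 1))) UNIV"
    by (intro has_sum_cmult_right has_sum_sum has_sum_add plus minus) auto
  moreover have "1 / (2 * real CARD('n)) *
        (\<Sum>n\<in>UNIV. srw_step (j + k) (z - axis n 1) + srw_step (j + k) (z + axis n 1))
      = srw_step (j + Suc k) z"
    by (simp add: add.commute)
  ultimately show ?case
    by (simp add: sum_distrib_left distrib_left)
qed

lemma srw_step_has_sum: "(srw_step k has_sum 1) (UNIV :: (int^'n) set)"
proof (induction k)
  case 0
  show ?case
    by (rule has_sum_finite_neutralI[where B="{0}"]) auto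
next
  case (Suc k)
  have shifted: "((\<lambda>x. srw_step k (x + a)) has_sum 1) UNIV" for a :: "int^'n"
    using Suc.IH has_sum_translate by blast
  have "((\<lambda>x::int^'n. 1 / (2 * real CARD('n)) *
          (\<Sum>n\<in>UNIV. srw_step k (x + axis n 1) + srw_step k (x + - axis n 1)))
      has_sum 1 / (2 * real CARD('n)) * (\<Sum>n\<in>(UNIV::'n set). 1 + 1)) UNIV"
    by (intro has_sum_cmult_right has_sum_sum has_sum_add shifted) auto
  then show ?case
    by simp
qed

lemma srw_step_le_1: "srw_step k x \<le> 1"
  using finite_sum_le_has_sum[OF srw_step_has_sum[of k], of "{x}"] srw_step_nonneg by auto

definition poisson_weight :: "nat \<Rightarrow> real \<Rightarrow> real" where
  "poisson_weight k t = exp (- t) * t ^ k / fact k"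

lemma poisson_weight_nonneg: "0 \<le> t \<Longrightarrow> 0 \<le> poisson_weight k t"
  by (simp add: poisson_weight_def)

lemma sums_poisson_weight: "(\<lambda>k. poisson_weight k t) sums 1"
proof -
  have "(\<lambda>k. exp (- t) * (t ^ k / fact k)) sums (exp (- t) * exp t)"
    using exp_converges[of t] by (intro sums_mult) (simp add: divide_inverse mult.commute)
  then show ?thesis
    by (simp add: poisson_weight_def exp_minus field_simps)
qed

lemma poisson_weight_convolution:
  "(\<Sum>j\<le>m. poisson_weight j u * poisson_weight (m - j) v) = poisson_weight m (u + v)"
proof -
  have "poisson_weight m (u + v)
      = (\<Sum>j\<le>m. exp (- (u + v)) / fact m * (of_nat (m choose j) * u ^ j * v ^ (m - j)))"
    by (simp add: poisson_weight_def binomial_ring sum_distrib_left sum_divide_distrib)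
  also have "\<dots> = (\<Sum>j\<le>m. poisson_weight j u * poisson_weight (m - j) v)"
    by (intro sum.cong refl)
       (simp add: binomial_fact poisson_weight_def exp_add[symmetric] exp_minus field_simps)
  finally show ?thesis ..
qed

text \<open>A Poisson(u) plus an independent Poisson(v) variable is Poisson(u + v).\<close>
lemma has_sum_poisson_weight_pairs:
  assumes "0 \<le> u" "0 \<le> v" "\<And>m. 0 \<le> Q m"
    and "((\<lambda>m. poisson_weight m (u + v) * Q m) has_sum S) UNIV"
  shows "((\<lambda>(j, k). poisson_weight j u * poisson_weight k v * Q (j + k)) has_sum S) UNIV"
proof -
  define F where "F = (\<lambda>(j, k). poisson_weight j u * poisson_weight k v * Q (j + k))"
  have bij: "bij_betw (\<lambda>(m, j). (j, m - j)) (Sigma UNIV (\<lambda>m. {..m})) (UNIV :: (nat \<times> nat) set)"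
    by (rule bij_betw_byWitness[where f'="\<lambda>(j, k). (j + k, j)"]) (auto simp: image_iff)
  have diagonal: "((\<lambda>j. F (j, m - j)) has_sum (poisson_weight m (u + v) * Q m)) {..m}" for m
  proof -
    have "(\<Sum>j\<le>m. F (j, m - j)) = (\<Sum>j\<le>m. poisson_weight j u * poisson_weight (m - j) v) * Q m"
      by (auto simp: F_def sum_distrib_right intro!: sum.cong)
    then show ?thesis
      by (intro has_sum_finiteI) (simp_all add: poisson_weight_convolution)
  qed
  have "F p \<ge> 0" for p
    using assms(1-3) by (auto simp: F_def poisson_weight_nonneg split: prod.splits)
  then have "(\<lambda>(m, j). F (j, m - j)) summable_on Sigma UNIV (\<lambda>m. {..m})"
    by (intro summable_on_SigmaI[where g="\<lambda>m. poisson_weight m (u + v) * Q m"])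
       (use diagonal assms(4) in \<open>auto intro: has_sum_imp_summable\<close>)
  then have "((\<lambda>(m, j). F (j, m - j)) has_sum S) (Sigma UNIV (\<lambda>m. {..m}))"
    by (intro has_sum_SigmaI[OF _ assms(4)]) (use diagonal in auto)
  then show ?thesis
    using has_sum_reindex_bij_betw[OF bij, of F S] by (simp add: F_def case_prod_unfold)
qed

text \<open>The law of the discrete walk after \<open>i + N\<close> steps, \<open>N\<close> being Poisson(t) distributed;
  index 0 is \<open>p\<^sub>t\<close> for \<open>t \<ge> 0\<close>.\<close>
definition poisson_walk :: "nat \<Rightarrow> real \<Rightarrow> int^'n \<Rightarrow> real" where
  "poisson_walk i t x = (\<Sum>k. poisson_weight k t * srw_step (k + i) x)"

lemma srw_p_eq_poisson_walk: "0 \<le> t \<Longrightarrow> srw_p t = poisson_walk 0 t"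
  by (simp add: fun_eq_iff srw_p_def poisson_walk_def poisson_weight_def)

lemma srw_p_negative: "t < 0 \<Longrightarrow> srw_p t x = 0"
  by (simp add: srw_p_def)

lemma summable_poisson_walk: "summable (\<lambda>k. poisson_weight k t * srw_step (k + i) x)"
proof (rule summable_comparison_test)
  have "summable (\<lambda>k. \<bar>t\<bar> ^ k / fact k)"
    using exp_converges[of "\<bar>t\<bar>"] by (simp add: sums_iff divide_inverse mult.commute)
  then show "summable (\<lambda>k. exp (- t) * (\<bar>t\<bar> ^ k / fact k))"
    by (rule summable_mult)
  have "norm (poisson_weight k t * srw_step (k + i) x) \<le> exp (- t) * (\<bar>t\<bar> ^ k / fact k)" for k
  proof -
    have "norm (poisson_weight k t * srw_step (k + i) x) = exp (- t) * (\<bar>t\<bar> ^ k / fact k) * srw_step (k + i) x"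
      by (simp add: poisson_weight_def abs_mult power_abs srw_step_nonneg)
    also have "\<dots> \<le> exp (- t) * (\<bar>t\<bar> ^ k / fact k)"
      by (intro mult_left_le srw_step_le_1) auto
    finally show ?thesis .
  qed
  then show "\<exists>N. \<forall>k\<ge>N. norm (poisson_weight k t * srw_step (k + i) x) \<le> exp (- t) * (\<bar>t\<bar> ^ k / fact k)"
    by blast
qed

lemma poisson_walk_has_sum:
  "0 \<le> t \<Longrightarrow> ((\<lambda>k. poisson_weight k t * srw_step (k + i) x) has_sum poisson_walk i t x) UNIV"
  unfolding poisson_walk_def
  by (intro sums_nonneg_imp_has_sum summable_sums summable_poisson_walk
      mult_nonneg_nonneg poisson_weight_nonneg srw_step_nonneg)

lemma poisson_walk_nonneg: "0 \<le> t \<Longrightarrow> 0 \<le> poisson_walk i t x"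
  unfolding poisson_walk_def
  by (intro suminf_nonneg summable_poisson_walk mult_nonneg_nonneg poisson_weight_nonneg srw_step_nonneg)

lemma sum_poisson_walk_le_1:
  assumes "0 \<le> t" "finite F"
  shows "(\<Sum>x\<in>F. poisson_walk i t x) \<le> 1"
proof -
  have "(\<Sum>x\<in>F. poisson_walk i t x) = (\<Sum>k. poisson_weight k t * (\<Sum>x\<in>F. srw_step (k + i) x))"
    unfolding poisson_walk_def
    by (subst suminf_sum[symmetric]) (simp_all add: summable_poisson_walk sum_distrib_left)
  also have "\<dots> \<le> (\<Sum>k. poisson_weight k t)"
  proof (rule suminf_le)
    show "poisson_weight k t * (\<Sum>x\<in>F. srw_step (k + i) x) \<le> poisson_weight k t" for k
      using finite_sum_le_has_sum[OF srw_step_has_sum[of "k + i"], of F] assms srw_step_nonneg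
      by (intro mult_left_le poisson_weight_nonneg) (auto intro: sum_nonneg)
    show "summable (\<lambda>k. poisson_weight k t * (\<Sum>x\<in>F. srw_step (k + i) x))"
      using summable_sum[of F "\<lambda>x k. poisson_weight k t * srw_step (k + i) x"]
      by (simp add: summable_poisson_walk sum_distrib_left)
  qed (rule sums_summable[OF sums_poisson_weight])
  also have "\<dots> = 1"
    using sums_poisson_weight by (rule sums_unique[symmetric])
  finally show ?thesis .
qed

lemma poisson_walk_Suc:
  "poisson_walk (Suc i) t x = 1 / (2 * real CARD('n)) *
     (\<Sum>n\<in>UNIV. poisson_walk i t (x + axis n 1) + poisson_walk i t (x - axis n 1))"
  for x :: "int^'n"
proof -
  define c where "c = 1 / (2 * real CARD('n))"
  have "poisson_walk (Suc i) t x = (\<Sum>k. c * (\<Sum>n\<in>UNIV.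
      poisson_weight k t * srw_step (k + i) (x + axis n 1) + poisson_weight k t * srw_step (k + i) (x - axis n 1)))"
    unfolding poisson_walk_def by (intro suminf_cong) (simp add: c_def sum_distrib_left algebra_simps)
  also have "\<dots> = c * (\<Sum>n\<in>UNIV.
      (\<Sum>k. poisson_weight k t * srw_step (k + i) (x + axis n 1))
      + (\<Sum>k. poisson_weight k t * srw_step (k + i) (x - axis n 1)))"
    by (simp add: suminf_mult summable_sum summable_add summable_poisson_walk suminf_sum suminf_add)
  finally show ?thesis
    by (simp add: poisson_walk_def c_def)
qed

lemma has_real_derivative_poisson_walk:
  "((\<lambda>t. poisson_walk i t x) has_real_derivative (poisson_walk (Suc i) t x - poisson_walk i t x)) (at t)"
proof -
  define c where "c j k = srw_step (k + j) x / fact k" for j k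
  have power_series: "poisson_walk j t x = exp (- t) * (\<Sum>k. c j k * t ^ k)" for j t
  proof -
    have "summable (\<lambda>k. poisson_weight k t * srw_step (k + j) x / exp (- t))"
      by (intro summable_divide summable_poisson_walk)
    then have "summable (\<lambda>k. c j k * t ^ k)"
      by (simp add: c_def poisson_weight_def mult_ac)
    then show ?thesis
      unfolding poisson_walk_def
      by (subst suminf_mult[symmetric]) (simp_all add: c_def poisson_weight_def mult_ac)
  qed
  have "diffs (c i) = c (Suc i)"
    by (simp add: fun_eq_iff diffs_def c_def fact_Suc divide_simps del: srw_step.simps)
  moreover have "summable (\<lambda>k. c i k * r ^ k)" for r
    using summable_divide[OF summable_poisson_walk, of r i x "exp (- r)"]
    by (simp add: c_def poisson_weight_def mult_ac)
  ultimately have "((\<lambda>t. \<Sum>k. c i k * t ^ k) has_real_derivative (\<Sum>k. c (Suc i) k * t ^ k)) (at t)"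
    using termdiffs_strong_converges_everywhere[of "c i" t] by auto
  then have "((\<lambda>t. exp (- t) * (\<Sum>k. c i k * t ^ k)) has_real_derivative
      - exp (- t) * (\<Sum>k. c i k * t ^ k) + exp (- t) * (\<Sum>k. c (Suc i) k * t ^ k)) (at t)"
    by (auto intro!: derivative_eq_intros)
  then show ?thesis
    by (simp add: power_series)
qed

lemma continuous_on_poisson_walk [continuous_intros]:
  "continuous_on A f \<Longrightarrow> continuous_on A (\<lambda>t. poisson_walk i (f t) x)"
  by (rule continuous_on_compose2[of UNIV, OF continuous_at_imp_continuous_on])
     (auto intro: DERIV_isCont has_real_derivative_poisson_walk)

lemma poisson_walk_chapman_kolmogorov:
  assumes "0 \<le> u" "0 \<le> v"
  shows "((\<lambda>x. poisson_walk i u (x + a) * poisson_walk l v (x + b))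
           has_sum poisson_walk (i + l) (u + v) (a - b)) UNIV"
proof -
  define z where "z = a - b"
  define f where "f = (\<lambda>((j, k), x). poisson_weight j u * poisson_weight k v *
                                      (srw_step (j + i) (x + z) * srw_step (k + l) x))"
  have f_nonneg: "0 \<le> f p" for p
    using assms by (auto simp: f_def poisson_weight_nonneg srw_step_nonneg split: prod.splits)
  have inner: "((\<lambda>x. f ((j, k), x)) has_sum
      poisson_weight j u * poisson_weight k v * srw_step (j + k + (i + l)) z) UNIV" for j k
    using has_sum_cmult_right[OF srw_step_convolution[of "j + i" z "k + l"]]
    by (simp add: f_def add_ac)
  have outer: "((\<lambda>(j, k). poisson_weight j u * poisson_weight k v * srw_step (j + k + (i + l)) z)
      has_sum poisson_walk (i + l) (u + v) z) UNIV"
    using assms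
    by (intro has_sum_poisson_weight_pairs poisson_walk_has_sum) (auto simp: srw_step_nonneg)
  have "f summable_on Sigma UNIV (\<lambda>_. UNIV)"
    by (rule summable_on_SigmaI[OF _ has_sum_imp_summable[OF outer]])
       (use inner f_nonneg in auto)
  then have "(f has_sum poisson_walk (i + l) (u + v) z) (UNIV \<times> UNIV)"
    by (intro has_sum_SigmaI[OF _ outer]) (use inner in auto)
  then have swapped: "((\<lambda>(x, jk). f (jk, x)) has_sum poisson_walk (i + l) (u + v) z) (UNIV \<times> UNIV)"
    by (subst (asm) has_sum_swap) simp
  have "((\<lambda>(j, k). (poisson_weight j u * srw_step (j + i) (x + z)) * (poisson_weight k v * srw_step (k + l) x))
      has_sum poisson_walk i u (x + z) * poisson_walk l v x) (UNIV \<times> UNIV)" for x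
    using assms
    by (intro has_sum_product_nonneg poisson_walk_has_sum)
       (auto intro: mult_nonneg_nonneg poisson_weight_nonneg srw_step_nonneg)
  then have "((\<lambda>jk. f (jk, x)) has_sum poisson_walk i u (x + z) * poisson_walk l v x) UNIV" for x
    by (simp add: f_def case_prod_unfold mult_ac)
  then have "((\<lambda>x. poisson_walk i u (x + z) * poisson_walk l v x) has_sum poisson_walk (i + l) (u + v) z) UNIV"
    by (intro has_sum_SigmaD[OF swapped]) auto
  then show ?thesis
    using has_sum_translate[of "\<lambda>x. poisson_walk i u (x + z) * poisson_walk l v x" b]
    by (simp add: z_def algebra_simps)
qed

text \<open>For \<open>r \<ge> 0\<close> this is \<open>-2 \<partial>\<^sub>r p\<^sub>r(z)\<close>, i.e. \<open>-(1/d) \<Delta>p\<^sub>r(z)\<close>.\<close>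
definition srw_decay :: "real \<Rightarrow> int^'n \<Rightarrow> real" where
  "srw_decay r z = 2 * (poisson_walk 0 r z - poisson_walk 1 r z)"

lemma has_real_derivative_poisson_walk_0:
  "((\<lambda>t. poisson_walk 0 t x) has_real_derivative - srw_decay t x / 2) (at t)"
proof -
  have "- srw_decay t x / 2 = poisson_walk (Suc 0) t x - poisson_walk 0 t x"
    by (simp add: srw_decay_def)
  then show ?thesis
    using has_real_derivative_poisson_walk[of 0 x t] by simp
qed

lemma grad_products_has_sum:
  fixes y y' :: "int^'n"
  assumes "0 \<le> u" "0 \<le> v"
  shows "((\<lambda>x. grad n (srw_p u) (x + y) * grad n (srw_p v) (x + y')) has_sum
     2 * poisson_walk 0 (u + v) (y - y') - poisson_walk 0 (u + v) (y - y' + axis n 1)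
       - poisson_walk 0 (u + v) (y - y' - axis n 1)) UNIV"
proof -
  define e :: "int^'n" where "e = axis n 1"
  note CK = poisson_walk_chapman_kolmogorov[OF assms, of 0 _ 0]
  have "((\<lambda>x. poisson_walk 0 u (x + (y + e)) * poisson_walk 0 v (x + (y' + e))
           - poisson_walk 0 u (x + (y + e)) * poisson_walk 0 v (x + y')
           - poisson_walk 0 u (x + y) * poisson_walk 0 v (x + (y' + e))
           + poisson_walk 0 u (x + y) * poisson_walk 0 v (x + y'))
       has_sum poisson_walk 0 (u + v) (y - y') - poisson_walk 0 (u + v) (y - y' + e)
         - poisson_walk 0 (u + v) (y - y' - e) + poisson_walk 0 (u + v) (y - y')) UNIV"
    using CK[of "y + e" "y' + e"] CK[of "y + e" y'] CK[of y "y' + e"] CK[of y y']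
    by (intro has_sum_add has_sum_diff) (simp_all add: algebra_simps)
  then show ?thesis
    using assms by (simp add: grad_def srw_p_eq_poisson_walk e_def algebra_simps)
qed

lemma grad_inner_has_sum:
  fixes y y' :: "int^'n"
  shows "((\<lambda>x. 1 / real CARD('n) * (\<Sum>n\<in>UNIV. grad n (srw_p u) (x + y) * grad n (srw_p v) (x + y')))
     has_sum (if 0 \<le> u \<and> 0 \<le> v then srw_decay (u + v) (y - y') else 0)) UNIV"
proof (cases "0 \<le> u \<and> 0 \<le> v")
  case True
  define R :: "int^'n \<Rightarrow> real" where "R = poisson_walk 0 (u + v)"
  have "((\<lambda>x. 1 / real CARD('n) * (\<Sum>n\<in>UNIV. grad n (srw_p u) (x + y) * grad n (srw_p v) (x + y')))
      has_sum 1 / real CARD('n) *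
        (\<Sum>n\<in>UNIV. 2 * R (y - y') - R (y - y' + axis n 1) - R (y - y' - axis n 1))) UNIV"
    using True by (intro has_sum_cmult_right has_sum_sum) (auto simp: R_def grad_products_has_sum)
  moreover have "(\<Sum>n\<in>UNIV. 2 * R (y - y') - R (y - y' + axis n 1) - R (y - y' - axis n 1))
      = 2 * real CARD('n) * (R (y - y') - poisson_walk 1 (u + v) (y - y'))"
    using poisson_walk_Suc[of 0 "u + v" "y - y'"]
    by (simp add: R_def sum_subtractf sum.distrib[symmetric] algebra_simps)
  ultimately show ?thesis
    using True by (simp add: srw_decay_def R_def)
next
  case False
  then show ?thesis
    by (auto simp: grad_def srw_p_negative)
qed

definition grad_energy :: "real \<Rightarrow> int^'n \<Rightarrow> real" where
  "grad_energy u x = 1 / real CARD('n) * (\<Sum>n\<in>UNIV. (grad n (srw_p u) x)\<^sup>2)"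

lemma grad_energy_nonneg: "0 \<le> grad_energy u x"
  by (simp add: grad_energy_def sum_nonneg)

lemma grad_energy_has_sum:
  "(grad_energy u has_sum (if 0 \<le> u then srw_decay (2 * u) (0::int^'n) else 0)) (UNIV :: (int^'n) set)"
proof -
  have "(\<lambda>x::int^'n. 1 / real CARD('n) * (\<Sum>n\<in>UNIV. grad n (srw_p u) (x + 0) * grad n (srw_p u) (x + 0)))
      = grad_energy u"
    by (simp only: fun_eq_iff grad_energy_def power2_eq_square add_0_right simp_thms)
  then show ?thesis
    using grad_inner_has_sum[where u=u and v=u and y="0::int^'n" and y'=0]
    by (simp only: conj_absorb diff_self mult_2)
qed

lemma grad_energy_le: "grad_energy u x \<le> (if 0 \<le> u then srw_decay (2 * u) (0::int^'n) else 0)"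
  for x :: "int^'n"
proof -
  have "sum (grad_energy u) {x} \<le> (if 0 \<le> u then srw_decay (2 * u) (0::int^'n) else 0)"
    by (rule finite_sum_le_has_sum[OF grad_energy_has_sum]) (auto simp: grad_energy_nonneg)
  then show ?thesis
    by simp
qed

lemma srw_decay_origin_nonneg: "0 \<le> r \<Longrightarrow> 0 \<le> srw_decay r (0::int^'n)"
  using order_trans[OF grad_energy_nonneg grad_energy_le[of "r / 2" "0::int^'n"]] by simp

lemma grad_sq_le_grad_energy: "(grad n (srw_p u) x)\<^sup>2 \<le> real CARD('n) * grad_energy u x"
  for x :: "int^'n"
  using member_le_sum[of n UNIV "\<lambda>m. (grad m (srw_p u) x)\<^sup>2"] by (simp add: grad_energy_def)

lemma grad_sq_le_srw_decay:
  fixes x :: "int^'n"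
  assumes "0 \<le> u"
  shows "(grad n (srw_p u) x)\<^sup>2 \<le> real CARD('n) * srw_decay (2 * u) (0::int^'n)"
proof -
  have "grad_energy u x \<le> srw_decay (2 * u) (0::int^'n)"
    using grad_energy_le[of u x] assms by simp
  then show ?thesis
    using grad_sq_le_grad_energy[of n u x] by (meson mult_left_mono of_nat_0_le_iff order_trans)
qed

lemma srw_p_nonneg: "0 \<le> srw_p t x"
  by (cases "t < 0") (simp_all add: srw_p_negative srw_p_eq_poisson_walk poisson_walk_nonneg)

lemma sum_srw_p_le_1: "finite F \<Longrightarrow> (\<Sum>x\<in>F. srw_p t x) \<le> 1"
  by (cases "t < 0") (simp_all add: srw_p_negative srw_p_eq_poisson_walk sum_poisson_walk_le_1)

lemma srw_p_le_1: "srw_p t x \<le> 1"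
  using sum_srw_p_le_1[of "{x}" t] by simp

lemma srw_p_origin_antimono:
  assumes "0 \<le> a" "a \<le> b"
  shows "srw_p b (0::int^'n) \<le> srw_p a (0::int^'n)"
proof -
  have "\<exists>y. ((\<lambda>r. poisson_walk 0 r (0::int^'n)) has_real_derivative y) (at r) \<and> y \<le> 0"
    if "a \<le> r" for r
    using that assms has_real_derivative_poisson_walk_0 srw_decay_origin_nonneg[of r] by force
  then have "poisson_walk 0 b (0::int^'n) \<le> poisson_walk 0 a (0::int^'n)"
    using DERIV_nonpos_imp_nonincreasing[where f="\<lambda>r. poisson_walk 0 r (0::int^'n)", OF assms(2)]
    by simp
  with assms show ?thesis
    by (simp add: srw_p_eq_poisson_walk)
qed

lemma exists_small_srw_decay:
  assumes "0 < \<epsilon>"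
  shows "\<exists>r>0. srw_decay r (0::int^'n) \<le> \<epsilon>"
proof -
  obtain r where r: "0 < r" "r < 2 / \<epsilon>" and
    "poisson_walk 0 (2 / \<epsilon>) (0::int^'n) - poisson_walk 0 0 (0::int^'n)
       = (2 / \<epsilon> - 0) * (- srw_decay r (0::int^'n) / 2)"
    using MVT2[OF _ has_real_derivative_poisson_walk_0[where x="0::int^'n"], of 0 "2 / \<epsilon>"] assms
    by auto
  then have "srw_decay r (0::int^'n) = \<epsilon> * (srw_p 0 (0::int^'n) - srw_p (2 / \<epsilon>) (0::int^'n))"
    using assms by (simp add: srw_decay_def srw_p_eq_poisson_walk field_simps)
  also have "\<dots> \<le> \<epsilon>"
    using assms srw_p_le_1[of 0 "0::int^'n"] srw_p_nonneg[of "2 / \<epsilon>" "0::int^'n"] by (simp add: mult_left_le)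
  finally show ?thesis
    using r by blast
qed

text \<open>If \<open>p\<^sub>u\<close> varies by at most \<open>\<delta>\<close> along the axis, then \<open>p\<^sub>u \<ge> p\<^sub>u(0) - L\<delta>\<close> at the first
  \<open>L + 1\<close> points of the axis, and these values add up to at most 1.\<close>
lemma srw_p_origin_le_of_grad_le:
  assumes "\<And>x::int^'n. \<bar>srw_p u (x + axis n 1) - srw_p u x\<bar> \<le> \<delta>"
  shows "real (Suc L) * (srw_p u (0::int^'n) - real L * \<delta>) \<le> 1"
proof -
  define p :: "nat \<Rightarrow> int^'n" where "p j = axis n (int j)" for j
  have "0 \<le> \<delta>"
    using assms[of 0] by simp
  have p_Suc: "p (Suc j) = p j + axis n 1" for j
    by (simp add: p_def axis_def vec_eq_iff)
  have along: "srw_p u (0::int^'n) - real j * \<delta> \<le> srw_p u (p j)" for j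
  proof (induction j)
    case 0
    then show ?case by (simp add: p_def axis_def vec_eq_iff zero_vec_def)
  next
    case (Suc j)
    then show ?case
      using assms[of "p j"] by (simp add: p_Suc algebra_simps)
  qed
  have "real (Suc L) * (srw_p u (0::int^'n) - real L * \<delta>) = (\<Sum>j\<le>L. srw_p u (0::int^'n) - real L * \<delta>)"
    by simp
  also have "\<dots> \<le> (\<Sum>j\<le>L. srw_p u (p j))"
  proof (rule sum_mono)
    fix j assume "j \<in> {..L}"
    then have "real j * \<delta> \<le> real L * \<delta>"
      using \<open>0 \<le> \<delta>\<close> by (intro mult_right_mono) auto
    with along[of j] show "srw_p u (0::int^'n) - real L * \<delta> \<le> srw_p u (p j)"
      by linarith
  qed
  also have "\<dots> = (\<Sum>x\<in>p ` {..L}. srw_p u x)"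
    by (simp add: sum.reindex inj_on_def p_def axis_eq_axis)
  also have "\<dots> \<le> 1"
    by (simp add: sum_srw_p_le_1)
  finally show ?thesis .
qed

lemma srw_p_origin_tendsto_0: "((\<lambda>r. srw_p r (0::int^'n)) \<longlongrightarrow> 0) at_top"
proof (rule order_tendstoI)
  fix \<eta> :: real assume "\<eta> > 0"
  obtain L :: nat where L: "2 / \<eta> \<le> real L"
    using real_arch_simple by blast
  define \<delta> where "\<delta> = \<eta> / (4 * real (Suc L))"
  have "0 < \<delta>"
    using \<open>\<eta> > 0\<close> by (simp add: \<delta>_def)
  obtain \<xi> where "0 < \<xi>" and \<xi>: "srw_decay \<xi> (0::int^'n) \<le> \<delta>\<^sup>2 / real CARD('n)"
    using exists_small_srw_decay[of "\<delta>\<^sup>2 / real CARD('n)"] \<open>0 < \<delta>\<close> by auto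
  fix n :: 'n
  have "\<bar>srw_p (\<xi> / 2) (x + axis n 1) - srw_p (\<xi> / 2) x\<bar> \<le> \<delta>" for x :: "int^'n"
  proof -
    have "(grad n (srw_p (\<xi> / 2)) x)\<^sup>2 \<le> real CARD('n) * srw_decay \<xi> (0::int^'n)"
      using grad_sq_le_srw_decay[of "\<xi> / 2"] \<open>0 < \<xi>\<close> by simp
    also have "\<dots> \<le> \<delta>\<^sup>2"
      using \<xi> by (simp add: field_simps)
    finally show ?thesis
      using \<open>0 < \<delta>\<close> by (simp add: grad_def power2_le_iff_abs_le)
  qed
  then have "real (Suc L) * (srw_p (\<xi> / 2) (0::int^'n) - real L * \<delta>) \<le> 1"
    by (rule srw_p_origin_le_of_grad_le)
  then have "srw_p (\<xi> / 2) (0::int^'n) - real L * \<delta> \<le> 1 / real (Suc L)"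
    by (subst pos_le_divide_eq) (simp_all add: mult.commute)
  moreover have "real L * \<delta> < \<eta> / 4" "1 / real (Suc L) < \<eta> / 2"
    using L \<open>\<eta> > 0\<close> by (simp_all add: \<delta>_def field_simps)
  ultimately have "srw_p (\<xi> / 2) (0::int^'n) < \<eta>"
    using \<open>\<eta> > 0\<close> by linarith
  moreover have "srw_p r (0::int^'n) \<le> srw_p (\<xi> / 2) (0::int^'n)" if "\<xi> / 2 \<le> r" for r
    using that \<open>0 < \<xi>\<close> by (intro srw_p_origin_antimono) auto
  ultimately show "eventually (\<lambda>r. srw_p r (0::int^'n) < \<eta>) at_top"
    unfolding eventually_at_top_linorder by (intro exI[of _ "\<xi> / 2"]) (auto intro: le_less_trans)
qed (auto intro: always_eventually srw_p_nonneg less_le_trans)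

lemma srw_p_le_origin: "srw_p r z \<le> srw_p r (0::int^'n)"
  for z :: "int^'n"
proof (cases "r < 0")
  case False
  define u where "u = r / 2"
  have u: "0 \<le> u" "u + u = r"
    using False by (simp_all add: u_def)
  note CK = poisson_walk_chapman_kolmogorov[OF u(1) u(1), of 0 _ 0]
  have "((\<lambda>x. srw_p u (x + z) * srw_p u (x + 0)) has_sum srw_p r z) UNIV"
    using CK[of z 0] u by (simp add: srw_p_eq_poisson_walk)
  moreover have "((\<lambda>x. 1 / 2 * (srw_p u (x + z) * srw_p u (x + z) + srw_p u (x + 0) * srw_p u (x + 0)))
      has_sum srw_p r (0::int^'n)) UNIV"
    using has_sum_cmult_right[OF has_sum_add[OF CK[of z z] CK[of 0 0]], of "1 / 2"] u
    by (simp add: srw_p_eq_poisson_walk)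
  moreover have "a * b \<le> 1 / 2 * (a * a + b * b)" for a b :: real
    using sum_squares_bound[of a b] by (simp add: power2_eq_square)
  ultimately show ?thesis
    by (rule has_sum_mono)
qed (simp add: srw_p_negative)

lemma srw_p_tendsto_0: "((\<lambda>r. srw_p r z) \<longlongrightarrow> 0) at_top"
  for z :: "int^'n"
  by (intro tendsto_sandwich[OF _ _ tendsto_const srw_p_origin_tendsto_0[where 'n='n]]
        always_eventually allI srw_p_nonneg srw_p_le_origin)

lemma continuous_on_srw_decay [continuous_intros]:
  "continuous_on A f \<Longrightarrow> continuous_on A (\<lambda>t. srw_decay (f t) z)"
  unfolding srw_decay_def by (intro continuous_intros)

lemma has_real_derivative_poisson_walk_0_affine:
  "((\<lambda>t. - poisson_walk 0 (2 * t + c) z) has_real_derivative srw_decay (2 * t + c) z) (at t)"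
proof -
  have "((\<lambda>t. 2 * t + c) has_real_derivative 2) (at t)"
    by (auto intro!: derivative_eq_intros)
  from DERIV_chain2[OF has_real_derivative_poisson_walk_0 this]
  have "((\<lambda>t. poisson_walk 0 (2 * t + c) z) has_real_derivative - srw_decay (2 * t + c) z) (at t)"
    by simp
  then show ?thesis
    using DERIV_minus by fastforce
qed

lemma poisson_walk_0_affine_limits:
  shows "(((\<lambda>t. - poisson_walk 0 (2 * t + c) z) \<circ> real_of_ereal) \<longlongrightarrow> - poisson_walk 0 (2 * a + c) z)
           (at_right (ereal a))"
    and "(((\<lambda>t. - poisson_walk 0 (2 * t + c) z) \<circ> real_of_ereal) \<longlongrightarrow> 0) (at_left \<infinity>)"
proof -
  have "isCont (\<lambda>t. - poisson_walk 0 (2 * t + c) z) a"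
    by (rule DERIV_isCont[OF has_real_derivative_poisson_walk_0_affine])
  then show "(((\<lambda>t. - poisson_walk 0 (2 * t + c) z) \<circ> real_of_ereal) \<longlongrightarrow> - poisson_walk 0 (2 * a + c) z)
      (at_right (ereal a))"
    unfolding ereal_tendsto_simps1 by (auto simp: isCont_def intro: tendsto_mono[OF at_within_le_at])
  have "filterlim (\<lambda>t::real. 2 * t + c) at_top at_top"
    using filterlim_tendsto_add_at_top[OF tendsto_const
        filterlim_tendsto_pos_mult_at_top[OF tendsto_const _ filterlim_ident], of 2 c]
    by (simp add: add.commute)
  then have "((\<lambda>t. srw_p (2 * t + c) z) \<longlongrightarrow> 0) at_top"
    by (rule filterlim_compose[OF srw_p_tendsto_0])
  moreover have "eventually (\<lambda>t. srw_p (2 * t + c) z = poisson_walk 0 (2 * t + c) z) at_top"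
    using eventually_ge_at_top[of "- c / 2"] by eventually_elim (simp add: srw_p_eq_poisson_walk)
  ultimately have "((\<lambda>t. poisson_walk 0 (2 * t + c) z) \<longlongrightarrow> 0) at_top"
    by (rule Lim_transform_eventually)
  then show "(((\<lambda>t. - poisson_walk 0 (2 * t + c) z) \<circ> real_of_ereal) \<longlongrightarrow> 0) (at_left \<infinity>)"
    unfolding ereal_tendsto_simps1 using tendsto_minus by fastforce
qed

lemma isCont_srw_decay_affine: "isCont (\<lambda>t. srw_decay (2 * t + c) z) x"
  by (rule continuous_on_interior[of UNIV]) (auto intro!: continuous_intros)

lemma set_integrable_srw_decay_origin:
  fixes a :: real
  assumes "0 \<le> 2 * a + c"
  shows "set_integrable lborel (einterval a \<infinity>) (\<lambda>t. srw_decay (2 * t + c) (0::int^'n))"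
proof (rule interval_integral_FTC_nonneg(1)[OF _ has_real_derivative_poisson_walk_0_affine
      isCont_srw_decay_affine _ poisson_walk_0_affine_limits])
  show "AE t in lborel. ereal a < ereal t \<longrightarrow> ereal t < \<infinity> \<longrightarrow> 0 \<le> srw_decay (2 * t + c) (0::int^'n)"
    using assms by (intro AE_I2 impI srw_decay_origin_nonneg) simp
qed simp

lemma interval_integral_srw_decay:
  fixes a :: real
  assumes "set_integrable lborel (einterval a \<infinity>) (\<lambda>t. srw_decay (2 * t + c) z)"
  shows "(LBINT t=a..\<infinity>. srw_decay (2 * t + c) z) = poisson_walk 0 (2 * a + c) z"
proof -
  have "(LBINT t=a..\<infinity>. srw_decay (2 * t + c) z) = 0 - (- poisson_walk 0 (2 * a + c) z)"
  proof (rule interval_integral_FTC_integrable[OF _ _ isCont_srw_decay_affine assms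
        poisson_walk_0_affine_limits])
    show "((\<lambda>t. - poisson_walk 0 (2 * t + c) z) has_vector_derivative srw_decay (2 * x + c) z) (at x)" for x
      using has_real_derivative_poisson_walk_0_affine
      by (simp add: has_real_derivative_iff_has_vector_derivative)
  qed simp
  then show ?thesis
    by simp
qed

lemma borel_measurable_srw_p [measurable]: "(\<lambda>t. srw_p t x) \<in> borel_measurable borel"
proof -
  have "(\<lambda>t. indicator {0..} t * poisson_walk 0 t x) \<in> borel_measurable borel"
    by (intro borel_measurable_times borel_measurable_indicator borel_measurable_continuous_onI
        continuous_intros) simp_all
  moreover have "(\<lambda>t. srw_p t x) = (\<lambda>t. indicator {0..} t * poisson_walk 0 t x)"
    by (auto simp: fun_eq_iff srw_p_eq_poisson_walk srw_p_negative indicator_def)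
  ultimately show ?thesis
    by simp
qed

lemma borel_measurable_grad_product:
  "(\<lambda>t. grad n (srw_p (t + s)) (x + y) * grad n (srw_p (t + s')) (x + y')) \<in> borel_measurable borel"
  unfolding grad_def by measurable

lemma AE_window_eq_indicator_einterval:
  fixes s s' :: real and f :: "real \<Rightarrow> real"
  shows "AE t in lborel. (if 0 \<le> t + s \<and> 0 \<le> t + s' then f t else 0)
     = indicator (einterval (max (- s) (- s')) \<infinity>) t *\<^sub>R f t"
  using AE_lborel_singleton[of "max (- s) (- s')"]
  by eventually_elim (auto simp: indicator_def einterval_def)

lemma integrable_grad_energy_envelope:
  "integrable lborel (\<lambda>t. if 0 \<le> t + c then srw_decay (2 * (t + c)) (0::int^'n) else 0)"
proof -
  have "set_integrable lborel (einterval (- c) \<infinity>) (\<lambda>t. srw_decay (2 * t + 2 * c) (0::int^'n))"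
    by (rule set_integrable_srw_decay_origin) simp
  then have int: "integrable lborel (\<lambda>t. indicator (einterval (- c) \<infinity>) t *\<^sub>R srw_decay (2 * (t + c)) (0::int^'n))"
    by (simp add: set_integrable_def algebra_simps)
  have [measurable]: "(\<lambda>t. srw_decay (2 * (t + c)) (0::int^'n)) \<in> borel_measurable borel"
    by (intro borel_measurable_continuous_onI continuous_intros)
  have AE: "AE t in lborel. indicator (einterval (- c) \<infinity>) t *\<^sub>R srw_decay (2 * (t + c)) (0::int^'n)
      = (if 0 \<le> t + c then srw_decay (2 * (t + c)) (0::int^'n) else 0)"
    using AE_window_eq_indicator_einterval[of c c "\<lambda>t. srw_decay (2 * (t + c)) (0::int^'n)"]
    by eventually_elim simp
  show ?thesis
    by (rule integrable_cong_AE_imp[OF int _ AE]) measurable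
qed

lemma integral_srw_decay_window:
  assumes "integrable lborel (\<lambda>t. if 0 \<le> t + s \<and> 0 \<le> t + s' then srw_decay (t + s + (t + s')) z else 0)"
  shows "(\<integral>t. (if 0 \<le> t + s \<and> 0 \<le> t + s' then srw_decay (t + s + (t + s')) z else 0) \<partial>lborel)
           = srw_p \<bar>s - s'\<bar> z"
proof -
  define a where "a = max (- s) (- s')"
  define f where "f t = srw_decay (2 * t + (s + s')) z" for t
  have window: "(\<lambda>t. if 0 \<le> t + s \<and> 0 \<le> t + s' then srw_decay (t + s + (t + s')) z else 0)
      = (\<lambda>t. if 0 \<le> t + s \<and> 0 \<le> t + s' then f t else 0)"
    by (simp add: fun_eq_iff f_def algebra_simps)
  have [measurable]: "f \<in> borel_measurable borel"
    unfolding f_def by (intro borel_measurable_continuous_onI continuous_intros)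
  have AE: "AE t in lborel. (if 0 \<le> t + s \<and> 0 \<le> t + s' then f t else 0)
      = indicator (einterval a \<infinity>) t *\<^sub>R f t"
    unfolding a_def by (rule AE_window_eq_indicator_einterval)
  have "set_integrable lborel (einterval a \<infinity>) f"
    unfolding set_integrable_def by (rule integrable_cong_AE_imp[OF assms[unfolded window] _ AE]) measurable
  then have "(LBINT t=a..\<infinity>. f t) = poisson_walk 0 (2 * a + (s + s')) z"
    unfolding f_def by (rule interval_integral_srw_decay)
  moreover have "2 * a + (s + s') = \<bar>s - s'\<bar>"
    by (simp add: a_def max_def abs_if)
  ultimately show ?thesis
    unfolding window
    by (simp add: integral_cong_AE[OF _ _ AE] interval_lebesgue_integral_def set_lebesgue_integral_def
        srw_p_eq_poisson_walk)
qed

lemma abs_mult_le_half_sum_squares: "\<bar>a * b\<bar> \<le> (a\<^sup>2 + b\<^sup>2) / 2"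
  for a b :: real
  using sum_squares_bound[of "\<bar>a\<bar>" "\<bar>b\<bar>"] by (simp add: abs_mult)

lemma abs_grad_product_le:
  fixes a b :: "int^'n"
  shows "\<bar>grad n (srw_p u) a * grad n (srw_p v) b\<bar>
           \<le> real CARD('n) * (grad_energy u a + grad_energy v b) / 2"
  using abs_mult_le_half_sum_squares[of "grad n (srw_p u) a" "grad n (srw_p v) b"]
    grad_sq_le_grad_energy[of n u a] grad_sq_le_grad_energy[of n v b]
  by (simp add: distrib_left)

lemma abs_grad_inner_le:
  fixes a b :: "int^'n"
  shows "\<bar>1 / real CARD('n) * (\<Sum>n\<in>UNIV. grad n (srw_p u) a * grad n (srw_p v) b)\<bar>
           \<le> (grad_energy u a + grad_energy v b) / 2"
proof -
  have "\<bar>1 / real CARD('n) * (\<Sum>n\<in>UNIV. grad n (srw_p u) a * grad n (srw_p v) b)\<bar>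
      \<le> 1 / real CARD('n) * (\<Sum>n\<in>UNIV. \<bar>grad n (srw_p u) a * grad n (srw_p v) b\<bar>)"
    using sum_abs[of "\<lambda>n. grad n (srw_p u) a * grad n (srw_p v) b" UNIV]
    by (simp add: abs_mult divide_right_mono)
  also have "\<dots> \<le> 1 / real CARD('n) * (\<Sum>n\<in>UNIV. ((grad n (srw_p u) a)\<^sup>2 + (grad n (srw_p v) b)\<^sup>2) / 2)"
    by (intro mult_left_mono sum_mono abs_mult_le_half_sum_squares) auto
  also have "\<dots> = (grad_energy u a + grad_energy v b) / 2"
    by (simp add: grad_energy_def sum.distrib sum_divide_distrib[symmetric] add_divide_distrib
        distrib_left)
  finally show ?thesis .
qed

lemma integrable_grad_product:
  fixes x y y' :: "int^'n"
  shows "integrable lborel (\<lambda>t. grad n (srw_p (t + s)) (x + y) * grad n (srw_p (t + s')) (x + y'))"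
proof (rule Bochner_Integration.integrable_bound)
  let ?E = "\<lambda>c t. if 0 \<le> t + c then srw_decay (2 * (t + c)) (0::int^'n) else 0"
  show "integrable lborel (\<lambda>t. real CARD('n) * (?E s t + ?E s' t) / 2)"
    by (intro integrable_divide integrable_mult_right Bochner_Integration.integrable_add
        integrable_grad_energy_envelope)
  show "AE t in lborel. norm (grad n (srw_p (t + s)) (x + y) * grad n (srw_p (t + s')) (x + y'))
      \<le> norm (real CARD('n) * (?E s t + ?E s' t) / 2)"
  proof (rule AE_I2)
    fix t
    have "\<bar>grad n (srw_p (t + s)) (x + y) * grad n (srw_p (t + s')) (x + y')\<bar>
        \<le> real CARD('n) * (grad_energy (t + s) (x + y) + grad_energy (t + s') (x + y')) / 2"
      by (rule abs_grad_product_le)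
    also have "\<dots> \<le> real CARD('n) * (?E s t + ?E s' t) / 2"
      using grad_energy_le[of "t + s" "x + y"] grad_energy_le[of "t + s'" "x + y'"]
      by (intro divide_right_mono mult_left_mono add_mono) auto
    finally show "norm (grad n (srw_p (t + s)) (x + y) * grad n (srw_p (t + s')) (x + y'))
        \<le> norm (real CARD('n) * (?E s t + ?E s' t) / 2)"
      by simp
  qed
qed (use borel_measurable_grad_product in simp)

lemma absolutely_integrable_grad_product:
  fixes x y y' :: "int^'n"
  shows "(\<lambda>t. grad n (srw_p (t + s)) (x + y) * grad n (srw_p (t + s')) (x + y')) absolutely_integrable_on UNIV"
proof -
  have "(\<lambda>t. grad n (srw_p (t + s)) (x + y) * grad n (srw_p (t + s')) (x + y')) \<in> borel_measurable lborel"
    using borel_measurable_grad_product by simp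
  then have "integrable lebesgue (\<lambda>t. grad n (srw_p (t + s)) (x + y) * grad n (srw_p (t + s')) (x + y'))"
    by (subst integrable_completion) (simp_all add: integrable_grad_product)
  then show ?thesis
    by (simp add: set_integrable_def)
qed

lemma has_sum_integral_grad_inner:
  fixes y y' :: "int^'n"
  shows "((\<lambda>x. \<integral>t. 1 / real CARD('n) *
             (\<Sum>n\<in>UNIV. grad n (srw_p (t + s)) (x + y) * grad n (srw_p (t + s')) (x + y')) \<partial>lborel)
           has_sum srw_p \<bar>s - s'\<bar> (y - y')) UNIV"
proof -
  define H where "H x t = 1 / real CARD('n) *
    (\<Sum>n\<in>UNIV. grad n (srw_p (t + s)) (x + y) * grad n (srw_p (t + s')) (x + y'))" for x t
  define F where "F t = (if 0 \<le> t + s \<and> 0 \<le> t + s' then srw_decay (t + s + (t + s')) (y - y') else 0)"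
    for t
  define E where "E c t = (if 0 \<le> t + c then srw_decay (2 * (t + c)) (0::int^'n) else 0)" for c t
  define g where "g x t = (grad_energy (t + s) (x + y) + grad_energy (t + s') (x + y')) / 2" for x t
  have energy_sum: "((\<lambda>x. grad_energy (t + c) (x + w)) has_sum E c t) UNIV" for c t and w :: "int^'n"
    unfolding E_def by (subst has_sum_translate) (rule grad_energy_has_sum)
  have g_sum: "((\<lambda>x. g x t) has_sum (E s t + E s' t) / 2) UNIV" for t
    using has_sum_cmult_right[OF has_sum_add[OF energy_sum energy_sum], of "1 / 2"]
    by (simp add: g_def)
  have G_int: "integrable lborel (\<lambda>t. (E s t + E s' t) / 2)"
    unfolding E_def
    by (intro integrable_divide Bochner_Integration.integrable_add integrable_grad_energy_envelope)
  have H_int: "integrable lborel (H x)" for x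
    unfolding H_def by (intro integrable_mult_right Bochner_Integration.integrable_sum integrable_grad_product)
  have H_sum: "((\<lambda>x. H x t) has_sum F t) UNIV" for t
    unfolding H_def F_def by (rule grad_inner_has_sum)
  have H_le: "\<bar>H x t\<bar> \<le> g x t" for x t
    unfolding H_def g_def by (rule abs_grad_inner_le)
  have "infinite (UNIV :: (int^'n) set)"
    by (intro infinite_UNIV_vec infinite_UNIV_int)
  note dominated = has_sum_integral_dominated[OF this H_int H_sum H_le g_sum G_int]
  from dominated(2) show ?thesis
    unfolding H_def F_def integral_srw_decay_window[OF dominated(1)[unfolded F_def]] .
qed

theorem lemma4p2:
  fixes s s' :: real and y y' :: "int ^ 'n"
  shows "(\<forall>x n. (\<lambda>t. grad n (srw_p (t + s)) (x + y) * grad n (srw_p (t + s')) (x + y'))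
              absolutely_integrable_on (UNIV :: real set))
    \<and> ((\<lambda>x. (1 / real CARD('n)) *
           (\<Sum>n\<in>(UNIV :: 'n set). integral (UNIV :: real set)
              (\<lambda>t. grad n (srw_p (t + s)) (x + y) * grad n (srw_p (t + s')) (x + y'))))
        has_sum srw_p \<bar>s - s'\<bar> (y - y')) (UNIV :: (int ^ 'n) set)"
proof (intro conjI allI)
  show "(\<lambda>t. grad n (srw_p (t + s)) (x + y) * grad n (srw_p (t + s')) (x + y'))
      absolutely_integrable_on UNIV" for x n
    by (rule absolutely_integrable_grad_product)
next
  have "(\<integral>t. 1 / real CARD('n) *
          (\<Sum>n\<in>UNIV. grad n (srw_p (t + s)) (x + y) * grad n (srw_p (t + s')) (x + y')) \<partial>lborel)
      = 1 / real CARD('n) * (\<Sum>n\<in>UNIV. integral UNIV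
          (\<lambda>t. grad n (srw_p (t + s)) (x + y) * grad n (srw_p (t + s')) (x + y')))" for x
    by (simp add: Bochner_Integration.integral_sum integrable_grad_product integral_lborel)
  then show "((\<lambda>x. 1 / real CARD('n) * (\<Sum>n\<in>UNIV. integral UNIV
      (\<lambda>t. grad n (srw_p (t + s)) (x + y) * grad n (srw_p (t + s')) (x + y'))))
      has_sum srw_p \<bar>s - s'\<bar> (y - y')) UNIV"
    using has_sum_integral_grad_inner[where s=s and s'=s' and y=y and y'=y'] by (simp only:)
qed

end
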